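(* Let $\beta>0$, $N$ constant, $t>0$, and $(x,y)=r(\cos\phi,\sin\phi)$ with $r>0$. Set $\alpha=\beta r t$ and $\gamma=\cos(\phi/2)$. Define $$\psi_G=-\frac{N}{2\pi}\int_0^\infty\frac{dk}{k}\,J_0(A),\qquad A=\left[\left(kx+\frac{\beta t}{k}\right)^2+k^2y^2\right]^{1/2},$$ which is the Green's function of Proposition 3.1 with $k_d=0$. Then $$\psi_G=-\frac{N}{\pi}\int_0^\infty \frac{dz}{\sqrt{1+z^2}}\,J_0\!\left(2\sqrt{\alpha}\,(z^2+\gamma^2)^{1/2}\right).$$
   Context: $J_0$ is the Bessel function of the first kind of order zero. *)

theory Defs
  imports "HOL-Analysis.Analysis"
begin

definition bessel_J0 :: "real \<Rightarrow> real" where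
  "bessel_J0 x = (\<Sum>m. (-1)^m * (x/2)^(2*m) / (fact m)^2)"

end

theory Submission
  imports Defs "HOL-Real_Asymp.Real_Asymp"
begin

text \<open>The substitution \<open>k = \<surd>(\<beta>t/r) e\<^sup>s\<close>, \<open>s = arsinh z\<close> maps \<open>z \<in> \<real>\<close> onto \<open>k > 0\<close> and
  turns \<open>dk/k\<close> into \<open>dz/\<surd>(1 + z\<^sup>2)\<close>; since \<open>e\<^sup>s - e\<^sup>-\<^sup>s = 2z\<close> it turns \<open>A\<^sup>2\<close> into
  \<open>4\<alpha>(z\<^sup>2 + \<gamma>\<^sup>2)\<close>. The new integrand is even in \<open>z\<close>, so its integral over \<open>\<real>\<close> is twice
  the one over \<open>z > 0\<close>. Integrability of both sides comes from the decay
  \<open>J\<^sub>0(x) = O(x\<^sup>-\<^sup>1\<^sup>/\<^sup>2)\<close>, obtained from Bessel's equation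
  \<open>x J\<^sub>0'' + J\<^sub>0' + x J\<^sub>0 = 0\<close> through a Lyapunov function.\<close>

definition bessel_J0_coeff :: "nat \<Rightarrow> real" where
  "bessel_J0_coeff n =
     (if even n then (-1) ^ (n div 2) / (4 ^ (n div 2) * (fact (n div 2))\<^sup>2) else 0)"

lemma abs_bessel_J0_coeff_le: "\<bar>bessel_J0_coeff n\<bar> \<le> inverse (fact n)"
proof (cases "even n")
  case True
  then obtain m where n: "n = 2 * m" by blast
  have "fact (2 * m) = fact m * fact m * ((2 * m) choose m)"
    using binomial_fact_lemma[of m "2 * m"] by (simp add: mult_2)
  then have "(fact (2 * m) :: real) = fact m * fact m * real ((2 * m) choose m)"
    by (metis of_nat_fact of_nat_mult)
  moreover have "real ((2 * m) choose m) \<le> 4 ^ m"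
    using binomial_le_pow2[of "2 * m" m] by (simp add: power_mult flip: of_nat_le_iff)
  ultimately have "(fact (2 * m) :: real) \<le> 4 ^ m * (fact m)\<^sup>2"
    by (simp add: power2_eq_square mult_left_mono)
  then show ?thesis
    using n by (simp add: bessel_J0_coeff_def abs_mult power_abs field_simps)
qed (simp add: bessel_J0_coeff_def)

lemma summable_bessel_J0_coeff: "summable (\<lambda>n. bessel_J0_coeff n * x ^ n)"
  by (rule summable_comparison_test[OF _ summable_exp[of "\<bar>x\<bar>"]])
     (auto simp: abs_mult power_abs intro!: mult_right_mono abs_bessel_J0_coeff_le)

lemma bessel_J0_powser: "bessel_J0 x = (\<Sum>n. bessel_J0_coeff n * x ^ n)"
proof -
  have "(\<lambda>m. bessel_J0_coeff (2 * m) * x ^ (2 * m)) sums (\<Sum>n. bessel_J0_coeff n * x ^ n)"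
  proof (subst sums_mono_reindex)
    show "strict_mono (\<lambda>m::nat. 2 * m)" by (simp add: strict_mono_def)
    show "bessel_J0_coeff n * x ^ n = 0" if "n \<notin> range (\<lambda>m. 2 * m)" for n
      using that by (auto simp: bessel_J0_coeff_def elim!: evenE)
  qed (rule summable_sums[OF summable_bessel_J0_coeff])
  moreover have "bessel_J0_coeff (2 * m) * x ^ (2 * m) = (-1) ^ m * (x / 2) ^ (2 * m) / (fact m)\<^sup>2"
    for m by (simp add: bessel_J0_coeff_def power_mult power_divide)
  ultimately show ?thesis
    by (simp add: bessel_J0_def sums_iff)
qed

definition bessel_J0' :: "real \<Rightarrow> real" where
  "bessel_J0' x = (\<Sum>n. diffs bessel_J0_coeff n * x ^ n)"

definition bessel_J0'' :: "real \<Rightarrow> real" where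
  "bessel_J0'' x = (\<Sum>n. diffs (diffs bessel_J0_coeff) n * x ^ n)"

lemma summable_diffs_bessel_J0_coeff: "summable (\<lambda>n. diffs bessel_J0_coeff n * x ^ n)"
  by (rule termdiff_converges_all[OF summable_bessel_J0_coeff])

lemma summable_diffs_diffs_bessel_J0_coeff:
  "summable (\<lambda>n. diffs (diffs bessel_J0_coeff) n * x ^ n)"
  by (rule termdiff_converges_all[OF summable_diffs_bessel_J0_coeff])

lemma has_real_derivative_bessel_J0: "(bessel_J0 has_real_derivative bessel_J0' x) (at x)"
  unfolding bessel_J0'_def bessel_J0_powser[abs_def]
  by (rule termdiffs_strong_converges_everywhere[OF summable_bessel_J0_coeff])

lemma has_real_derivative_bessel_J0': "(bessel_J0' has_real_derivative bessel_J0'' x) (at x)"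
  unfolding bessel_J0''_def bessel_J0'_def[abs_def]
  by (rule termdiffs_strong_converges_everywhere[OF summable_diffs_bessel_J0_coeff])

lemma has_real_derivative_bessel_J0_compose [derivative_intros]:
  "(f has_real_derivative f') (at x within S) \<Longrightarrow>
   ((\<lambda>x. bessel_J0 (f x)) has_real_derivative bessel_J0' (f x) * f') (at x within S)"
  using DERIV_chain2[OF has_real_derivative_bessel_J0] by blast

lemma has_real_derivative_bessel_J0'_compose [derivative_intros]:
  "(f has_real_derivative f') (at x within S) \<Longrightarrow>
   ((\<lambda>x. bessel_J0' (f x)) has_real_derivative bessel_J0'' (f x) * f') (at x within S)"
  using DERIV_chain2[OF has_real_derivative_bessel_J0'] by blast

lemma continuous_on_bessel_J0: "continuous_on S bessel_J0"
  by (intro continuous_at_imp_continuous_on ballI DERIV_isCont[OF has_real_derivative_bessel_J0])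

lemma continuous_on_bessel_J0_compose [continuous_intros]:
  "continuous_on S f \<Longrightarrow> continuous_on S (\<lambda>x. bessel_J0 (f x))"
  by (rule continuous_on_compose2[OF continuous_on_bessel_J0]) auto

lemma borel_measurable_bessel_J0 [measurable]: "bessel_J0 \<in> borel_measurable borel"
  by (rule borel_measurable_continuous_onI[OF continuous_on_bessel_J0])

lemma bessel_J0_coeff_recurrence:
  "diffs (diffs bessel_J0_coeff) n + diffs bessel_J0_coeff (Suc n) + bessel_J0_coeff n = 0"
proof (cases "even n")
  case True
  then obtain m where n: "n = 2 * m" by blast
  have "bessel_J0_coeff (2 * Suc m) = - bessel_J0_coeff (2 * m) / (4 * (real m + 1)\<^sup>2)"
    by (simp add: bessel_J0_coeff_def power2_eq_square add.commute)
  moreover have "diffs (diffs bessel_J0_coeff) (2 * m) + diffs bessel_J0_coeff (Suc (2 * m))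
      = (4 * (real m + 1)\<^sup>2) * bessel_J0_coeff (2 * Suc m)"
    by (simp add: diffs_def power2_eq_square algebra_simps)
  ultimately show ?thesis
    using n by (simp del: of_nat_Suc)
qed (simp add: diffs_def bessel_J0_coeff_def)

lemma bessel_J0_ode: "x * bessel_J0'' x + bessel_J0' x + x * bessel_J0 x = 0"
proof -
  let ?c = bessel_J0_coeff
  have s0: "summable (\<lambda>n. ?c n * x ^ Suc n)"
    using summable_mult[OF summable_bessel_J0_coeff, of x] by (simp add: mult_ac)
  have s1: "summable (\<lambda>n. diffs ?c (Suc n) * x ^ Suc n)"
    using summable_diffs_bessel_J0_coeff by (subst summable_Suc_iff)
  have s2: "summable (\<lambda>n. diffs (diffs ?c) n * x ^ Suc n)"
    using summable_mult[OF summable_diffs_diffs_bessel_J0_coeff, of x] by (simp add: mult_ac)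
  have "bessel_J0' x = (\<Sum>n. diffs ?c (Suc n) * x ^ Suc n)"
    using suminf_split_head[OF summable_diffs_bessel_J0_coeff, of x]
    by (simp add: bessel_J0'_def diffs_def bessel_J0_coeff_def)
  moreover have "x * bessel_J0'' x = (\<Sum>n. diffs (diffs ?c) n * x ^ Suc n)"
    using suminf_mult[OF summable_diffs_diffs_bessel_J0_coeff, of x]
    by (simp add: bessel_J0''_def mult_ac)
  moreover have "x * bessel_J0 x = (\<Sum>n. ?c n * x ^ Suc n)"
    using suminf_mult[OF summable_bessel_J0_coeff, of x] by (simp add: bessel_J0_powser mult_ac)
  ultimately have "x * bessel_J0'' x + bessel_J0' x + x * bessel_J0 x
      = (\<Sum>n. (diffs (diffs ?c) n + diffs ?c (Suc n) + ?c n) * x ^ Suc n)"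
    using suminf_add[OF summable_add[OF s2 s1] s0] suminf_add[OF s2 s1]
    by (simp add: algebra_simps)
  then show ?thesis
    by (simp only: bessel_J0_coeff_recurrence) simp
qed

text \<open>A Lyapunov function for Bessel's equation: it is nonincreasing on \<open>x > 0\<close> and dominates
  \<open>x J\<^sub>0(x)\<^sup>2\<close>.\<close>
definition bessel_J0_energy :: "real \<Rightarrow> real" where
  "bessel_J0_energy x = x * (bessel_J0 x)\<^sup>2 + (bessel_J0 x)\<^sup>2 / (2 * x)
     + bessel_J0 x * bessel_J0' x + x * (bessel_J0' x)\<^sup>2"

lemma bessel_J0_energy_has_derivative:
  assumes "x > 0"
  shows "(bessel_J0_energy has_real_derivative - (bessel_J0 x)\<^sup>2 / (2 * x\<^sup>2)) (at x)"
proof -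
  define J D E where "J = bessel_J0 x" and "D = bessel_J0' x" and "E = bessel_J0'' x"
  have E: "E = (- D - x * J) / x"
    using bessel_J0_ode[of x] assms by (simp add: J_def D_def E_def field_simps)
  have "(bessel_J0_energy has_real_derivative
      (J\<^sup>2 + x * (2 * J * D)) + ((2 * J * D) * (2 * x) - J\<^sup>2 * 2) / (2 * x)\<^sup>2
      + (D * D + J * E) + (D\<^sup>2 + x * (2 * D * E))) (at x)"
    unfolding bessel_J0_energy_def[abs_def] J_def D_def E_def using assms
    by (auto intro!: derivative_eq_intros simp: power2_eq_square)
  also have "(J\<^sup>2 + x * (2 * J * D)) + ((2 * J * D) * (2 * x) - J\<^sup>2 * 2) / (2 * x)\<^sup>2
      + (D * D + J * E) + (D\<^sup>2 + x * (2 * D * E)) = - J\<^sup>2 / (2 * x\<^sup>2)"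
    unfolding E using assms by (simp add: field_simps power2_eq_square)
  finally show ?thesis
    by (simp add: J_def)
qed

lemma bessel_J0_energy_ge:
  assumes "x > 0"
  shows "x * (bessel_J0 x)\<^sup>2 \<le> bessel_J0_energy x"
proof -
  define J D where "J = bessel_J0 x" and "D = bessel_J0' x"
  have "x * (bessel_J0_energy x - x * J\<^sup>2) = (J / 2 + x * D)\<^sup>2 + J\<^sup>2 / 4"
    using assms by (simp add: bessel_J0_energy_def J_def D_def field_simps power2_eq_square)
  then have "x * (bessel_J0_energy x - x * J\<^sup>2) \<ge> 0"
    by simp
  then show ?thesis
    using assms by (simp add: J_def zero_le_mult_iff)
qed

lemma bessel_J0_sq_le_energy_1:
  assumes "x \<ge> 1"
  shows "x * (bessel_J0 x)\<^sup>2 \<le> bessel_J0_energy 1"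
proof -
  have "bessel_J0_energy x \<le> bessel_J0_energy 1"
  proof (rule DERIV_nonpos_imp_nonincreasing[OF assms])
    fix u :: real
    assume "1 \<le> u"
    then show "\<exists>y. (bessel_J0_energy has_real_derivative y) (at u) \<and> y \<le> 0"
      using bessel_J0_energy_has_derivative[of u] by (auto intro: divide_nonpos_nonneg)
  qed
  with bessel_J0_energy_ge[of x] assms show ?thesis
    by simp
qed

lemma bessel_J0_decay: "\<exists>K. \<forall>x\<ge>0. \<bar>bessel_J0 x\<bar> * sqrt (1 + x) \<le> K"
proof -
  obtain M where M: "\<And>x. x \<in> {0..1} \<Longrightarrow> \<bar>bessel_J0 x\<bar> \<le> M"
    using compact_imp_bounded[OF compact_continuous_image[OF continuous_on_bessel_J0 compact_Icc]]
    by (force simp: bounded_iff)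
  have "\<bar>bessel_J0 x\<bar> * sqrt (1 + x) \<le> max (M * sqrt 2) (sqrt (2 * bessel_J0_energy 1))"
    if "x \<ge> 0" for x
  proof (cases "x \<le> 1")
    case True
    then have "\<bar>bessel_J0 x\<bar> * sqrt (1 + x) \<le> M * sqrt 2"
      using M[of x] that by (intro mult_mono) auto
    then show ?thesis
      by linarith
  next
    case False
    have "(\<bar>bessel_J0 x\<bar> * sqrt (1 + x))\<^sup>2 = (bessel_J0 x)\<^sup>2 * (1 + x)"
      using that by (simp add: power_mult_distrib)
    also have "\<dots> \<le> 2 * (x * (bessel_J0 x)\<^sup>2)"
      using False mult_left_mono[of "1 + x" "2 * x" "(bessel_J0 x)\<^sup>2"] by (simp add: mult_ac)
    also have "\<dots> \<le> 2 * bessel_J0_energy 1"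
      using bessel_J0_sq_le_energy_1[of x] False by simp
    finally have "\<bar>bessel_J0 x\<bar> * sqrt (1 + x) \<le> sqrt (2 * bessel_J0_energy 1)"
      using real_le_rsqrt by blast
    then show ?thesis
      by linarith
  qed
  then show ?thesis
    by blast
qed

lemma einterval_0_infinity: "einterval 0 \<infinity> = {0::real<..}"
  using einterval_eq_Ici[of 0] by (simp add: zero_ereal_def)

lemma set_integrable_one_plus_powr:
  fixes e :: real
  assumes "e < -1"
  shows "set_integrable lborel {0<..} (\<lambda>z. (1 + z) powr e)"
proof -
  define F where "F z = (1 + z) powr (e + 1) / (e + 1)" for z :: real
  have "e + 1 \<noteq> 0"
    using assms by simp
  have "set_integrable lborel (einterval 0 \<infinity>) (\<lambda>z. (1 + z) powr e)"
  proof (rule interval_integral_FTC_nonneg[where F = F and A = "F 0" and B = 0])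
    fix x :: real
    assume "0 < ereal x"
    then have "x > 0" by simp
    with \<open>e + 1 \<noteq> 0\<close> show "(F has_real_derivative (1 + x) powr e) (at x)"
      unfolding F_def by (auto intro!: derivative_eq_intros)
    show "isCont (\<lambda>z. (1 + z) powr e) x"
      using \<open>x > 0\<close> by (intro continuous_intros) auto
  next
    have "isCont F 0"
      unfolding F_def using \<open>e + 1 \<noteq> 0\<close> by (intro continuous_intros) auto
    then show "((F \<circ> real_of_ereal) \<longlongrightarrow> F 0) (at_right 0)"
      unfolding zero_ereal_def ereal_tendsto_simps1 by (simp add: isCont_def filterlim_at_split)
    show "((F \<circ> real_of_ereal) \<longlongrightarrow> 0) (at_left \<infinity>)"
      unfolding ereal_tendsto_simps1 F_def using assms by real_asymp
  qed auto
  then show ?thesis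
    by (simp add: einterval_0_infinity)
qed

lemma
  fixes f :: "real \<Rightarrow> real"
  assumes int: "set_integrable lborel {0<..} f" and even: "\<And>x. f (-x) = f x"
  shows integrable_even: "integrable lborel f"
    and integral_even: "integral\<^sup>L lborel f = 2 * (LBINT x:{0<..}. f x)"
proof -
  have pos: "interval_lebesgue_integrable lborel 0 \<infinity> f"
    using int by (simp add: interval_lebesgue_integral_0_infty)
  then have neg: "interval_lebesgue_integrable lborel (-\<infinity>) 0 f"
    using interval_integrable_mirror[of 0 \<infinity> f] by (simp add: even)
  have "set_integrable lborel (einterval (-\<infinity>) 0 \<union> {0} \<union> einterval 0 \<infinity>) f"
    using pos neg unfolding interval_lebesgue_integrable_def
    by (intro set_integrable_Un) auto
  moreover have "einterval (-\<infinity>) 0 \<union> {0} \<union> einterval 0 \<infinity> = (UNIV :: real set)"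
    by (auto simp: einterval_iff zero_ereal_def)
  ultimately show "integrable lborel f"
    by (simp add: set_integrable_def)
  then have "(LBINT x=-\<infinity>..\<infinity>. f x) = (LBINT x=-\<infinity>..0. f x) + (LBINT x=0..\<infinity>. f x)"
    using interval_integral_sum[of "-\<infinity>" 0 \<infinity> f]
    by (simp add: interval_lebesgue_integrable_def set_integrable_def)
  also have "(LBINT x=-\<infinity>..0. f x) = (LBINT x=0..\<infinity>. f x)"
    using interval_integral_reflect[of "-\<infinity>" 0 f] by (simp add: even)
  finally show "integral\<^sup>L lborel f = 2 * (LBINT x:{0<..}. f x)"
    by (simp add: interval_lebesgue_integral_def set_lebesgue_integral_def einterval_0_infinity)
qed

lemma exp_arsinh_real: "exp (arsinh z) = z + sqrt (z\<^sup>2 + 1)"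
  using arsinh_real_aux[of z] by (simp add: arsinh_real_def)

lemma tendsto_exp_arsinh_at_bot: "((\<lambda>z::real. exp (arsinh z)) \<longlongrightarrow> 0) at_bot"
proof -
  have "((\<lambda>z. z + sqrt (z\<^sup>2 + 1)) \<longlongrightarrow> 0) at_bot"
    by real_asymp
  then show ?thesis
    by (simp add: exp_arsinh_real)
qed

lemma filterlim_exp_arsinh_at_top: "filterlim (\<lambda>z::real. exp (arsinh z)) at_top at_top"
proof -
  have "filterlim (\<lambda>z. z + sqrt (z\<^sup>2 + 1)) at_top at_top"
    by real_asymp
  then show ?thesis
    by (simp add: exp_arsinh_real)
qed

lemma
  fixes h :: "real \<Rightarrow> real" and a :: real
  assumes a: "a > 0" and h: "continuous_on {0<..} h"
    and int: "integrable lborel (\<lambda>z. h (a * exp (arsinh z)) / sqrt (1 + z\<^sup>2))"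
  shows set_integrable_arsinh_substitution: "set_integrable lborel {0<..} (\<lambda>k. h k / k)"
    and set_integral_arsinh_substitution:
      "(LBINT k:{0<..}. h k / k) = (LBINT z. h (a * exp (arsinh z)) / sqrt (1 + z\<^sup>2))"
proof -
  define g where "g z = a * exp (arsinh z)" for z
  define g' where "g' z = g z / sqrt (1 + z\<^sup>2)" for z
  define f where "f = (\<lambda>k. h k / k)"
  have sq_pos: "1 + z\<^sup>2 > 0" for z :: real
    by (simp add: add_pos_nonneg)
  have g_pos: "g z > 0" for z
    using a by (simp add: g_def)
  have g'_pos: "g' z > 0" for z
    using g_pos[of z] sq_pos[of z] by (simp add: g'_def)
  have g_deriv: "(g has_real_derivative g' z) (at z)" for z
    unfolding g_def g'_def by (auto intro!: derivative_eq_intros simp: add.commute)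
  have g'_cont: "isCont g' z" for z
    unfolding g'_def g_def using sq_pos[of z] by (intro continuous_intros) simp
  have f_cont: "continuous_on {0<..} f"
    unfolding f_def by (intro continuous_intros h) auto
  then have f_cont_g: "isCont f (g z)" for z
    using continuous_on_eq_continuous_at[of "{0<..}" f] g_pos[of z] by simp
  have fg: "g' z * f (g z) = h (a * exp (arsinh z)) / sqrt (1 + z\<^sup>2)" for z
    using a by (simp add: f_def g'_def g_def)
  have lim_bot: "((ereal \<circ> g \<circ> real_of_ereal) \<longlongrightarrow> 0) (at_right (-\<infinity>))"
    unfolding zero_ereal_def ereal_tendsto_simps1 ereal_tendsto_simps2 g_def
    using tendsto_mult[OF tendsto_const tendsto_exp_arsinh_at_bot, of a] by simp
  have lim_top: "((ereal \<circ> g \<circ> real_of_ereal) \<longlongrightarrow> \<infinity>) (at_left \<infinity>)"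
    unfolding ereal_tendsto_simps1 ereal_tendsto_simps2 g_def
    by (rule filterlim_tendsto_pos_mult_at_top[OF tendsto_const a filterlim_exp_arsinh_at_top])
  have int_fg: "set_integrable lborel (einterval (-\<infinity>) \<infinity>) (\<lambda>z. g' z *\<^sub>R f (g z))"
    using int by (simp add: fg set_integrable_def)
  have "set_integrable lborel (einterval 0 \<infinity>) (\<lambda>k. \<bar>f k\<bar>)"
  proof (rule interval_integral_substitution_nonneg[where g = g and g' = g', OF _ g_deriv])
    show "set_integrable lborel (einterval (-\<infinity>) \<infinity>) (\<lambda>z. \<bar>f (g z)\<bar> * g' z)"
      using set_integrable_abs[OF int_fg] by (simp add: abs_mult abs_of_pos[OF g'_pos] mult.commute)
  qed (use f_cont_g g'_cont g'_pos lim_bot lim_top in \<open>auto intro: continuous_intros less_imp_le\<close>)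
  moreover have "set_borel_measurable lborel (einterval 0 \<infinity>) f"
    using set_measurable_continuous_on[OF _ f_cont]
    by (simp add: einterval_0_infinity set_borel_measurable_def)
  ultimately have int_f: "set_integrable lborel (einterval 0 \<infinity>) f"
    by (simp add: set_integrable_abs_iff)
  then show "set_integrable lborel {0<..} (\<lambda>k. h k / k)"
    by (simp add: einterval_0_infinity f_def)
  have "(LBINT k=0..\<infinity>. f k) = (LBINT z=-\<infinity>..\<infinity>. g' z *\<^sub>R f (g z))"
    by (rule interval_integral_substitution_integrable[where g = g and g' = g', OF _ g_deriv _ _ _
          lim_bot lim_top int_fg int_f])
       (use f_cont_g g'_cont g'_pos in \<open>auto intro: less_imp_le\<close>)
  then have "(LBINT k:{0<..}. f k) = (LBINT z. h (a * exp (arsinh z)) / sqrt (1 + z\<^sup>2))"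
    by (simp add: fg einterval_0_infinity interval_lebesgue_integral_def set_lebesgue_integral_def)
  then show "(LBINT k:{0<..}. h k / k) = (LBINT z. h (a * exp (arsinh z)) / sqrt (1 + z\<^sup>2))"
    unfolding f_def .
qed

lemma exp_arsinh_sub_inverse: "exp (arsinh z) - 1 / exp (arsinh z) = 2 * (z :: real)"
  using sinh_arsinh_real[of z] by (simp add: sinh_field_def exp_minus field_simps)

lemma green_argument_arsinh:
  fixes P r \<phi> z :: real
  assumes P: "P > 0" and r: "r > 0"
  defines "k \<equiv> sqrt (P / r) * exp (arsinh z)"
  shows "sqrt ((k * (r * cos \<phi>) + P / k)\<^sup>2 + k\<^sup>2 * (r * sin \<phi>)\<^sup>2)
           = 2 * sqrt (P * r) * sqrt (z\<^sup>2 + (cos (\<phi> / 2))\<^sup>2)"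
proof -
  define w where "w = exp (arsinh z)"
  have w: "w > 0"
    by (simp add: w_def)
  have k2: "k\<^sup>2 = P / r * w\<^sup>2"
    using P r by (simp add: k_def w_def power_mult_distrib)
  have k: "k \<noteq> 0"
    using P r by (simp add: k_def)
  have "(k * (r * c) + P / k)\<^sup>2 + k\<^sup>2 * (r * s)\<^sup>2
      = k\<^sup>2 * r\<^sup>2 * (c\<^sup>2 + s\<^sup>2) + 2 * P * r * c + P\<^sup>2 / k\<^sup>2" for c s
    using k by (simp add: power2_eq_square field_simps)
  then have "(k * (r * cos \<phi>) + P / k)\<^sup>2 + k\<^sup>2 * (r * sin \<phi>)\<^sup>2
      = k\<^sup>2 * r\<^sup>2 + 2 * P * r * cos \<phi> + P\<^sup>2 / k\<^sup>2"
    by simp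
  also have "\<dots> = P * r * ((w - 1 / w)\<^sup>2 + 2 + 2 * cos \<phi>)"
  proof -
    have "k\<^sup>2 * r\<^sup>2 = P * r * w\<^sup>2" "P\<^sup>2 / k\<^sup>2 = P * r * (1 / w)\<^sup>2"
      unfolding k2 using P r w by (simp_all add: power2_eq_square field_simps)
    then show ?thesis
      using w by (simp add: power2_eq_square field_simps)
  qed
  also have "\<dots> = 4 * (P * r) * (z\<^sup>2 + (cos (\<phi> / 2))\<^sup>2)"
  proof -
    have "(w - 1 / w)\<^sup>2 = 4 * z\<^sup>2"
      unfolding w_def exp_arsinh_sub_inverse by (simp add: power_mult_distrib)
    moreover have "cos \<phi> = 2 * (cos (\<phi> / 2))\<^sup>2 - 1"
      using cos_double_cos[of "\<phi> / 2"] by simp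
    ultimately show ?thesis
      by (simp only:) (simp add: algebra_simps)
  qed
  finally show ?thesis
    by (simp add: real_sqrt_mult)
qed

lemma abs_bessel_J0_sqrt_div_le:
  fixes c \<gamma> :: real
  assumes c: "c > 0"
  obtains C where
    "\<And>z. z \<ge> 0 \<Longrightarrow> \<bar>bessel_J0 (c * sqrt (z\<^sup>2 + \<gamma>\<^sup>2)) / sqrt (1 + z\<^sup>2)\<bar> \<le> C * (1 + z) powr (-3/2)"
proof -
  obtain K where K: "\<And>x. x \<ge> 0 \<Longrightarrow> \<bar>bessel_J0 x\<bar> * sqrt (1 + x) \<le> K"
    using bessel_J0_decay by blast
  have K_nonneg: "K \<ge> 0"
    using K[of 0] abs_ge_zero[of "bessel_J0 0"] by simp
  define m where "m = min 1 c"
  have m: "m > 0" "m \<le> 1" "m \<le> c"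
    using c by (auto simp: m_def)
  have "\<bar>bessel_J0 (c * sqrt (z\<^sup>2 + \<gamma>\<^sup>2)) / sqrt (1 + z\<^sup>2)\<bar> \<le> K * sqrt 2 / sqrt m * (1 + z) powr (-3/2)"
    if z: "z \<ge> 0" for z
  proof -
    define u where "u = c * sqrt (z\<^sup>2 + \<gamma>\<^sup>2)"
    have "z \<le> sqrt (z\<^sup>2 + \<gamma>\<^sup>2)"
      using z real_sqrt_le_mono[of "z\<^sup>2" "z\<^sup>2 + \<gamma>\<^sup>2"] by simp
    then have "c * z \<le> u"
      using c by (simp add: u_def)
    moreover have "m * z \<le> c * z"
      using m z by (simp add: mult_right_mono)
    ultimately have "m * (1 + z) \<le> 1 + u"
      using m by (simp add: distrib_left)
    then have "sqrt m * sqrt (1 + z) \<le> sqrt (1 + u)"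
      by (simp flip: real_sqrt_mult)
    then have "\<bar>bessel_J0 u\<bar> * (sqrt m * sqrt (1 + z)) \<le> \<bar>bessel_J0 u\<bar> * sqrt (1 + u)"
      by (rule mult_left_mono) simp
    also have "\<dots> \<le> K"
      using c by (intro K) (simp add: u_def)
    finally have J: "\<bar>bessel_J0 u\<bar> \<le> K / (sqrt m * sqrt (1 + z))"
      using m z by (simp add: le_divide_eq)
    have "(1 + z)\<^sup>2 \<le> 2 * (1 + z\<^sup>2)"
      using sum_squares_ge_zero[of "1 - z" 0] by (simp add: power2_eq_square algebra_simps)
    then have "1 + z \<le> sqrt 2 * sqrt (1 + z\<^sup>2)"
      using z by (simp add: real_le_rsqrt flip: real_sqrt_mult)
    then have S: "1 / sqrt (1 + z\<^sup>2) \<le> sqrt 2 / (1 + z)"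
      using z by (simp add: field_simps add_pos_nonneg)
    have "\<bar>bessel_J0 u / sqrt (1 + z\<^sup>2)\<bar> = \<bar>bessel_J0 u\<bar> * (1 / sqrt (1 + z\<^sup>2))"
      by (simp add: abs_divide)
    also have "\<dots> \<le> K / (sqrt m * sqrt (1 + z)) * (sqrt 2 / (1 + z))"
      using J S K_nonneg by (intro mult_mono) auto
    also have "\<dots> = K * sqrt 2 / sqrt m * (1 / ((1 + z) * sqrt (1 + z)))"
      by simp
    also have "(1 + z) * sqrt (1 + z) = (1 + z) powr (3/2)"
      using powr_add[of "1 + z" 1 "1/2"] z by (simp add: powr_half_sqrt)
    also have "1 / (1 + z) powr (3/2) = (1 + z) powr (-3/2)"
      by (simp add: powr_minus_divide)
    finally show ?thesis
      by (simp add: u_def)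
  qed
  then show ?thesis
    using that by blast
qed

lemma set_integrable_bessel_J0_sqrt_div:
  fixes c \<gamma> :: real
  assumes "c > 0"
  shows "set_integrable lborel {0<..} (\<lambda>z. bessel_J0 (c * sqrt (z\<^sup>2 + \<gamma>\<^sup>2)) / sqrt (1 + z\<^sup>2))"
proof -
  obtain C where C: "\<And>z. z \<ge> 0 \<Longrightarrow>
      \<bar>bessel_J0 (c * sqrt (z\<^sup>2 + \<gamma>\<^sup>2)) / sqrt (1 + z\<^sup>2)\<bar> \<le> C * (1 + z) powr (-3/2)"
    using abs_bessel_J0_sqrt_div_le[OF assms] by blast
  show ?thesis
  proof (rule set_integrable_bound)
    show "set_integrable lborel {0<..} (\<lambda>z. C * (1 + z) powr (-3/2))"
      by (intro set_integrable_mult_right set_integrable_one_plus_powr) simp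
    show "AE z in lborel. z \<in> {0<..} \<longrightarrow>
        norm (bessel_J0 (c * sqrt (z\<^sup>2 + \<gamma>\<^sup>2)) / sqrt (1 + z\<^sup>2)) \<le> norm (C * (1 + z) powr (-3/2))"
      using C by (intro AE_I2) (force intro: order_trans[OF _ abs_ge_self])
  qed (simp add: set_borel_measurable_def)
qed

theorem mainTheorem5:
  fixes \<beta> N t r \<phi> x y \<alpha> \<gamma> \<psi>G :: real
  assumes "\<beta> > 0" and "t > 0" and "r > 0"
    and "x = r * cos \<phi>" and "y = r * sin \<phi>"
    and "\<alpha> = \<beta> * r * t" and "\<gamma> = cos (\<phi> / 2)"
    and "\<psi>G = - N / (2 * pi) *
           integral {0<..} (\<lambda>k. bessel_J0 (sqrt ((k * x + \<beta> * t / k)^2 + k^2 * y^2)) / k)"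
  shows "(\<lambda>k. bessel_J0 (sqrt ((k * x + \<beta> * t / k)^2 + k^2 * y^2)) / k) integrable_on {0<..} \<and>
         (\<lambda>z. bessel_J0 (2 * sqrt \<alpha> * sqrt (z^2 + \<gamma>^2)) / sqrt (1 + z^2)) integrable_on {0<..} \<and>
         \<psi>G = - N / pi *
           integral {0<..} (\<lambda>z. bessel_J0 (2 * sqrt \<alpha> * sqrt (z^2 + \<gamma>^2)) / sqrt (1 + z^2))"
proof -
  define h where "h k = bessel_J0 (sqrt ((k * x + \<beta> * t / k)^2 + k^2 * y^2))" for k
  define f where "f = (\<lambda>z. bessel_J0 (2 * sqrt \<alpha> * sqrt (z^2 + \<gamma>^2)) / sqrt (1 + z^2))"
  define a where "a = sqrt (\<beta> * t / r)"
  have "\<beta> * t > 0" "\<alpha> > 0" "a > 0"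
    using assms(1-3,6) by (simp_all add: a_def)
  have f_int: "set_integrable lborel {0<..} f"
    unfolding f_def using \<open>\<alpha> > 0\<close> by (intro set_integrable_bessel_J0_sqrt_div) simp
  have f_even: "f (-z) = f z" for z
    by (simp add: f_def)
  have subst: "h (a * exp (arsinh z)) / sqrt (1 + z\<^sup>2) = f z" for z
    using green_argument_arsinh[OF \<open>\<beta> * t > 0\<close> \<open>r > 0\<close>, of z \<phi>]
    unfolding h_def f_def a_def assms(4-7) by (simp add: mult_ac)
  have h_cont: "continuous_on {0<..} h"
    unfolding h_def by (intro continuous_intros) auto
  have f_whole: "integrable lborel f"
    by (rule integrable_even[OF f_int f_even])
  have h_int: "set_integrable lborel {0<..} (\<lambda>k. h k / k)"
    using set_integrable_arsinh_substitution[OF \<open>a > 0\<close> h_cont] f_whole by (simp add: subst)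
  have "(LBINT k:{0<..}. h k / k) = (LBINT z. f z)"
    using set_integral_arsinh_substitution[OF \<open>a > 0\<close> h_cont] f_whole by (simp add: subst)
  also have "(LBINT z. f z) = 2 * (LBINT z:{0<..}. f z)"
    by (rule integral_even[OF f_int f_even])
  finally have "integral {0<..} (\<lambda>k. h k / k) = 2 * integral {0<..} f"
    using set_borel_integral_eq_integral(2)[OF h_int] set_borel_integral_eq_integral(2)[OF f_int]
    by simp
  then show ?thesis
    using set_borel_integral_eq_integral(1)[OF h_int] set_borel_integral_eq_integral(1)[OF f_int]
    unfolding assms(8) h_def f_def by simp
qed

end
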